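(* Let $\dagger=\Omega_1\land\cdots\land\Omega_M$ be a $3$-SAT formula in CNF over Boolean variables $\sigma_1,\dots,\sigma_N$, each clause $\Omega_k=(\ell^k_1\lor\ell^k_2\lor\ell^k_3)$ consisting of exactly three literals over three distinct variables. Let $\ddagger$ be the Max $2$-SAT instance over $\sigma_1,\dots,\sigma_N,d^1,\dots,d^M$ consisting, for each $k$, of the block $\Omega'_k$ of $10$ clauses $$(\ell^k_1),(\ell^k_2),(\ell^k_3),(d^k),(\neg\ell^k_1\lor\neg\ell^k_2),(\neg\ell^k_1\lor\neg\ell^k_3),(\neg\ell^k_2\lor\neg\ell^k_3),(\ell^k_1\lor\neg d^k),(\ell^k_2\lor\neg d^k),(\ell^k_3\lor\neg d^k).$$ Suppose $\ddagger$ has been solved, yielding an assignment of all $N+M$ variables. For $a\in\{0,1\}$ let $I_a=\{k: d^k=a\}$, let $\mathfrak{S}_a$ be the number of satisfied clauses of $\ddagger$ lying in the blocks $\Omega'_k$, $k\in I_a$, and let $\mathcal{V}_a,\mathcal{S}_a$ be the numbers of $k\in I_a$ for which $\Omega_k$ is violated, respectively satisfied. Let $\mathcal{V}=\mathcal{V}_0+\mathcal{V}_1$ and $\mathcal{S}=\mathcal{S}_0+\mathcal{S}_1$ be the numbers of violated and satisfied clauses of $\dagger$. Then: (i) $(\mathcal{V}_0,\mathcal{S}_0)$ is the unique non-negative integer solution of $6\mathcal{V}_0+7\mathcal{S}_0=\mathfrak{S}_0$, $\mathcal{V}_0+\mathcal{S}_0=|I_0|$; (ii) (determination by enumeration) $(\mathcal{V}_1,\mathcal{S}_1)$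 lies in the finite set of pairs $(v,\,s_2+s_3)$ where $(s_2,s_3,v)$ ranges over the non-negative integer solutions of $\mathfrak{S}_1=6s_2+7s_3+4v$, $|I_1|=v+s_2+s_3$; consequently $(\mathcal{V},\mathcal{S})$ lies in a finite set of candidates computable from $\mathfrak{S}_0,\mathfrak{S}_1,|I_0|,|I_1|$; (iii) if in addition the number of Case 1 clauses (those $k$ with $\ell^k_1=\ell^k_2=\ell^k_3=0$) is known, then the exact values of $\mathcal{V}$ and $\mathcal{S}$ are retrieved.
   Context: Truth values are identified with $\{0,1\}$. "Case 1" refers to a clause $\Omega_k$ whose three literals are all false under the assignment. The variables $d^k$ are called ancillary variables. *)

theory Defs
  imports Main
begin

text \<open>Variables of the Max 2-SAT instance: the original variables sigma_i
  (index i) and the ancillary variables d^k (index k). Indices are 0-based.\<close>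
datatype var = Sig nat | D nat

text \<open>A literal over variables of type 'v is a pair (variable, polarity);
  polarity True means the positive literal. Truth values are bool (0 = False, 1 = True).\<close>
type_synonym 'v lit = "'v \<times> bool"

definition lit_val :: "('v \<Rightarrow> bool) \<Rightarrow> 'v lit \<Rightarrow> bool" where
  "lit_val \<alpha> l = (if snd l then \<alpha> (fst l) else \<not> \<alpha> (fst l))"

definition neg_lit :: "'v lit \<Rightarrow> 'v lit" where
  "neg_lit l = (fst l, \<not> snd l)"

definition clause_sat :: "('v \<Rightarrow> bool) \<Rightarrow> 'v lit list \<Rightarrow> bool" where
  "clause_sat \<alpha> C = (\<exists>l\<in>set C. lit_val \<alpha> l)"

definition is_3sat :: "nat \<Rightarrow> nat lit list list \<Rightarrow> bool" where
  "is_3sat N F = (\<forall>C\<in>set F. length C = 3 \<and> distinct (map fst C) \<and> (\<forall>l\<in>set C. fst l < N))"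

definition lift :: "nat lit \<Rightarrow> var lit" where
  "lift l = (Sig (fst l), snd l)"

definition block :: "nat lit list list \<Rightarrow> nat \<Rightarrow> var lit list list" where
  "block F k = (let l1 = lift (F!k!0); l2 = lift (F!k!1); l3 = lift (F!k!2); d = (D k, True) in
     [[l1], [l2], [l3], [d],
      [neg_lit l1, neg_lit l2], [neg_lit l1, neg_lit l3], [neg_lit l2, neg_lit l3],
      [l1, neg_lit d], [l2, neg_lit d], [l3, neg_lit d]])"

definition max2sat :: "nat lit list list \<Rightarrow> var lit list list" where
  "max2sat F = concat (map (block F) [0..<length F])"

definition num_sat :: "(var \<Rightarrow> bool) \<Rightarrow> var lit list list \<Rightarrow> nat" where
  "num_sat \<alpha> Cs = length (filter (clause_sat \<alpha>) Cs)"

definition solves_max2sat :: "nat lit list list \<Rightarrow> (var \<Rightarrow> bool) \<Rightarrow> bool" where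
  "solves_max2sat F \<alpha> = (\<forall>\<beta>. num_sat \<beta> (max2sat F) \<le> num_sat \<alpha> (max2sat F))"

definition Iset :: "nat lit list list \<Rightarrow> (var \<Rightarrow> bool) \<Rightarrow> bool \<Rightarrow> nat set" where
  "Iset F \<alpha> a = {k. k < length F \<and> \<alpha> (D k) = a}"

definition frakS :: "nat lit list list \<Rightarrow> (var \<Rightarrow> bool) \<Rightarrow> bool \<Rightarrow> nat" where
  "frakS F \<alpha> a = (\<Sum>k\<in>Iset F \<alpha> a. num_sat \<alpha> (block F k))"

definition orig_sat :: "(var \<Rightarrow> bool) \<Rightarrow> nat lit list \<Rightarrow> bool" where
  "orig_sat \<alpha> C = clause_sat (\<lambda>i. \<alpha> (Sig i)) C"

definition Vcount :: "nat lit list list \<Rightarrow> (var \<Rightarrow> bool) \<Rightarrow> bool \<Rightarrow> nat" where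
  "Vcount F \<alpha> a = card {k\<in>Iset F \<alpha> a. \<not> orig_sat \<alpha> (F!k)}"

definition Scount :: "nat lit list list \<Rightarrow> (var \<Rightarrow> bool) \<Rightarrow> bool \<Rightarrow> nat" where
  "Scount F \<alpha> a = card {k\<in>Iset F \<alpha> a. orig_sat \<alpha> (F!k)}"

definition cand1 :: "nat \<Rightarrow> nat \<Rightarrow> (nat \<times> nat) set" where
  "cand1 S1 n1 = {(v, s2 + s3) | v s2 s3. S1 = 6*s2 + 7*s3 + 4*v \<and> n1 = v + s2 + s3}"

definition cand :: "nat \<Rightarrow> nat \<Rightarrow> nat \<Rightarrow> nat \<Rightarrow> (nat \<times> nat) set" where
  "cand S0 S1 n0 n1 = {(v0 + v1, s0 + s1) | v0 s0 v1 s1.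
      6*v0 + 7*s0 = S0 \<and> v0 + s0 = n0 \<and> (v1, s1) \<in> cand1 S1 n1}"

definition case1_count :: "nat lit list list \<Rightarrow> (var \<Rightarrow> bool) \<Rightarrow> nat" where
  "case1_count F \<alpha> = card {k. k < length F \<and> (\<forall>l\<in>set (F!k). \<not> lit_val (\<lambda>i. \<alpha> (Sig i)) l)}"

end

theory Submission imports Defs begin

(* The ancillary variable d^k occurs only in the block Omega'_k, so an optimal assignment
   chooses d^k optimally for its block. A finite check over the values of d^k and of the three
   literals then shows that an optimal block satisfies exactly 7 of its 10 clauses when Omega_k
   is satisfied and 6 when it is violated, and that d^k = 1 forces Omega_k to be satisfied.
   Hence V_1 = 0 and frakS_a = 6 V_a + 7 S_a, so every candidate set of the theorem collapses
   to a single point, and the violated clauses of the 3-SAT formula are exactly the Case 1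
   clauses. *)

definition block_sat_count :: "bool \<Rightarrow> bool \<Rightarrow> bool \<Rightarrow> bool \<Rightarrow> nat" where
  "block_sat_count d a b c =
     length (filter id [a, b, c, d, \<not> a \<or> \<not> b, \<not> a \<or> \<not> c, \<not> b \<or> \<not> c, a \<or> \<not> d, b \<or> \<not> d, c \<or> \<not> d])"

lemma block_sat_count_optimal:
  assumes "block_sat_count (\<not> d) a b c \<le> block_sat_count d a b c"
  shows "block_sat_count d a b c = (if a \<or> b \<or> c then 7 else 6)" and "d \<Longrightarrow> a \<or> b \<or> c"
  using assms by (cases d; cases a; cases b; cases c; simp add: block_sat_count_def)+

lemma lit_val_lift: "lit_val \<alpha> (lift l) = lit_val (\<lambda>i. \<alpha> (Sig i)) l"
  by (simp add: lit_val_def lift_def)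

abbreviation block_lit_val :: "(var \<Rightarrow> bool) \<Rightarrow> nat lit list list \<Rightarrow> nat \<Rightarrow> nat \<Rightarrow> bool" where
  "block_lit_val \<alpha> F k j \<equiv> lit_val \<alpha> (lift (F!k!j))"

lemma num_sat_block:
  "num_sat \<alpha> (block F k) =
     block_sat_count (\<alpha> (D k)) (block_lit_val \<alpha> F k 0) (block_lit_val \<alpha> F k 1) (block_lit_val \<alpha> F k 2)"
  by (simp add: num_sat_def block_def Let_def block_sat_count_def clause_sat_def lit_val_def neg_lit_def)

lemma num_sat_block_upd_D:
  assumes "j \<noteq> k"
  shows "num_sat (\<alpha>(D k := x)) (block F j) = num_sat \<alpha> (block F j)"
  using assms by (simp add: num_sat_block lit_val_lift)

lemma num_sat_max2sat: "num_sat \<beta> (max2sat F) = (\<Sum>k<length F. num_sat \<beta> (block F k))"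
proof -
  have "num_sat \<beta> (max2sat F) = sum_list (map (\<lambda>k. num_sat \<beta> (block F k)) [0..<length F])"
    unfolding num_sat_def max2sat_def by (simp add: filter_concat length_concat o_def)
  then show ?thesis
    by (simp add: sum_set_upt_conv_sum_list_nat[symmetric] atLeast0LessThan)
qed

lemma solves_max2sat_block_optimal:
  assumes opt: "solves_max2sat F \<alpha>" and k: "k < length F"
  shows "num_sat (\<alpha>(D k := x)) (block F k) \<le> num_sat \<alpha> (block F k)"
proof -
  define \<beta> where "\<beta> = \<alpha>(D k := x)"
  define rest where "rest \<gamma> = (\<Sum>j\<in>{..<length F} - {k}. num_sat \<gamma> (block F j))" for \<gamma>
  have split: "num_sat \<gamma> (max2sat F) = num_sat \<gamma> (block F k) + rest \<gamma>" for \<gamma>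
    unfolding num_sat_max2sat rest_def using k by (simp add: sum.remove)
  have "rest \<beta> = rest \<alpha>"
    unfolding rest_def \<beta>_def by (intro sum.cong) (auto simp: num_sat_block_upd_D)
  with opt show ?thesis
    unfolding solves_max2sat_def \<beta>_def[symmetric] by (metis split add_le_cancel_right)
qed

lemma orig_sat_three_lits:
  assumes "length C = 3"
  shows "orig_sat \<alpha> C \<longleftrightarrow> lit_val \<alpha> (lift (C!0)) \<or> lit_val \<alpha> (lift (C!1)) \<or> lit_val \<alpha> (lift (C!2))"
proof -
  obtain a b c where "C = [a, b, c]"
    using assms by (metis (no_types) length_0_conv length_Suc_conv numeral_3_eq_3)
  then show ?thesis by (simp add: orig_sat_def clause_sat_def lit_val_lift)
qed

lemma
  assumes F: "is_3sat N F" and opt: "solves_max2sat F \<alpha>" and k: "k < length F"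
  shows num_sat_block_of_optimal: "num_sat \<alpha> (block F k) = (if orig_sat \<alpha> (F!k) then 7 else 6)"
    and orig_sat_of_optimal_D: "\<alpha> (D k) \<Longrightarrow> orig_sat \<alpha> (F!k)"
proof -
  have flip: "block_sat_count (\<not> \<alpha> (D k)) (block_lit_val \<alpha> F k 0) (block_lit_val \<alpha> F k 1) (block_lit_val \<alpha> F k 2)
      \<le> block_sat_count (\<alpha> (D k)) (block_lit_val \<alpha> F k 0) (block_lit_val \<alpha> F k 1) (block_lit_val \<alpha> F k 2)"
    using solves_max2sat_block_optimal[OF opt k, of "\<not> \<alpha> (D k)"]
    by (simp add: num_sat_block lit_val_lift)
  have sat: "orig_sat \<alpha> (F!k) \<longleftrightarrow> block_lit_val \<alpha> F k 0 \<or> block_lit_val \<alpha> F k 1 \<or> block_lit_val \<alpha> F k 2"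
    using F k by (intro orig_sat_three_lits) (simp add: is_3sat_def)
  show "num_sat \<alpha> (block F k) = (if orig_sat \<alpha> (F!k) then 7 else 6)"
    using block_sat_count_optimal(1)[OF flip] by (simp add: num_sat_block sat)
  show "orig_sat \<alpha> (F!k)" if "\<alpha> (D k)"
    using block_sat_count_optimal(2)[OF flip that] by (simp add: sat)
qed

lemma finite_Iset [simp]: "finite (Iset F \<alpha> a)"
  by (simp add: Iset_def)

lemma card_Iset: "card (Iset F \<alpha> a) = Vcount F \<alpha> a + Scount F \<alpha> a"
  unfolding Vcount_def Scount_def
  by (subst card_Un_disjoint[symmetric]) (auto intro: arg_cong[where f = card])

lemma length_eq_card_Iset: "length F = card (Iset F \<alpha> False) + card (Iset F \<alpha> True)"
proof -
  have "{..<length F} = Iset F \<alpha> False \<union> Iset F \<alpha> True"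
    and "Iset F \<alpha> False \<inter> Iset F \<alpha> True = {}"
    by (auto simp: Iset_def)
  then show ?thesis by (metis card_Un_disjoint card_lessThan finite_Iset)
qed

context
  fixes N :: nat and F :: "nat lit list list" and \<alpha> :: "var \<Rightarrow> bool"
  assumes F: "is_3sat N F" and opt: "solves_max2sat F \<alpha>"
begin

lemma frakS_of_optimal: "frakS F \<alpha> a = 6 * Vcount F \<alpha> a + 7 * Scount F \<alpha> a"
proof -
  let ?I = "Iset F \<alpha> a" and ?P = "\<lambda>k. orig_sat \<alpha> (F!k)"
  have "frakS F \<alpha> a = (\<Sum>k\<in>?I. if ?P k then 7 else 6)"
    unfolding frakS_def by (intro sum.cong) (auto simp: Iset_def num_sat_block_of_optimal[OF F opt])
  also have "\<dots> = 7 * card {k \<in> ?I. ?P k} + 6 * card {k \<in> ?I. \<not> ?P k}"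
    by (simp add: sum.If_cases Int_def set_diff_eq conj_commute)
  finally show ?thesis by (simp add: Vcount_def Scount_def)
qed

lemma Vcount_True_of_optimal: "Vcount F \<alpha> True = 0"
  using orig_sat_of_optimal_D[OF F opt] by (auto simp: Vcount_def Iset_def)

lemma case1_count_of_optimal: "case1_count F \<alpha> = Vcount F \<alpha> False"
proof -
  have "{k. k < length F \<and> (\<forall>l\<in>set (F!k). \<not> lit_val (\<lambda>i. \<alpha> (Sig i)) l)}
      = {k \<in> Iset F \<alpha> False. \<not> orig_sat \<alpha> (F!k)}"
    using orig_sat_of_optimal_D[OF F opt] by (auto simp: Iset_def orig_sat_def clause_sat_def)
  then show ?thesis by (simp add: case1_count_def Vcount_def)
qed

end

lemma weighted_count_eq_iff:
  fixes v s V S :: nat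
  shows "6 * v + 7 * s = 6 * V + 7 * S \<and> v + s = V + S \<longleftrightarrow> v = V \<and> s = S"
  by arith

lemma cand1_all_sat: "cand1 (7 * n) n = {(0, n)}"
proof -
  have "(0, n) = (0, 0 + n) \<and> 7 * n = 6 * 0 + 7 * n + 4 * 0 \<and> n = 0 + 0 + n"
    by simp
  then have "(0, n) \<in> cand1 (7 * n) n"
    unfolding cand1_def by blast
  moreover have "cand1 (7 * n) n \<subseteq> {(0, n)}"
    unfolding cand1_def by auto
  ultimately show ?thesis by blast
qed

lemma cand_of_optimal: "cand (6 * V + 7 * S) (7 * n) (V + S) n = {(V, S + n)}"
proof -
  have "6 * v + 7 * s = 6 * V + 7 * S \<and> v + s = V + S \<and> R \<longleftrightarrow> v = V \<and> s = S \<and> R"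
    for v s :: nat and R
    using weighted_count_eq_iff by blast
  then show ?thesis
    by (simp add: cand_def cand1_all_sat)
qed

theorem theorem2:
  fixes N :: nat and F :: "nat lit list list" and \<alpha> :: "var \<Rightarrow> bool"
  assumes "is_3sat N F"
    and "solves_max2sat F \<alpha>"
  defines "V \<equiv> Vcount F \<alpha> False + Vcount F \<alpha> True"
    and "S \<equiv> Scount F \<alpha> False + Scount F \<alpha> True"
  shows "({(v::nat, s::nat). 6*v + 7*s = frakS F \<alpha> False \<and> v + s = card (Iset F \<alpha> False)}
            = {(Vcount F \<alpha> False, Scount F \<alpha> False)})
        \<and> (Vcount F \<alpha> True, Scount F \<alpha> True) \<in> cand1 (frakS F \<alpha> True) (card (Iset F \<alpha> True))
        \<and> finite (cand1 (frakS F \<alpha> True) (card (Iset F \<alpha> True)))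
        \<and> (V, S) \<in> cand (frakS F \<alpha> False) (frakS F \<alpha> True) (card (Iset F \<alpha> False)) (card (Iset F \<alpha> True))
        \<and> finite (cand (frakS F \<alpha> False) (frakS F \<alpha> True) (card (Iset F \<alpha> False)) (card (Iset F \<alpha> True)))
        \<and> V = case1_count F \<alpha> \<and> S = length F - case1_count F \<alpha>
        \<and> (\<forall>(v, s) \<in> cand (frakS F \<alpha> False) (frakS F \<alpha> True) (card (Iset F \<alpha> False)) (card (Iset F \<alpha> True)).
             v = case1_count F \<alpha> \<longrightarrow> (v, s) = (V, S))"
proof -
  note optimal = assms(1,2)
  have "Vcount F \<alpha> True = 0" by (rule Vcount_True_of_optimal[OF optimal])
  moreover have "card (Iset F \<alpha> a) = Vcount F \<alpha> a + Scount F \<alpha> a" for a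
    by (rule card_Iset)
  moreover have "frakS F \<alpha> a = 6 * Vcount F \<alpha> a + 7 * Scount F \<alpha> a" for a
    by (rule frakS_of_optimal[OF optimal])
  moreover have "case1_count F \<alpha> = Vcount F \<alpha> False"
    by (rule case1_count_of_optimal[OF optimal])
  moreover have "length F = card (Iset F \<alpha> False) + card (Iset F \<alpha> True)"
    by (rule length_eq_card_Iset)
  ultimately show ?thesis
    unfolding V_def S_def
    by (simp add: weighted_count_eq_iff cand1_all_sat cand_of_optimal)
qed

end
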